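(* Let $U\cong\mathbb R^2$ be Euclidean, $\Omega\subset U$ convex compact with $0\in\operatorname{int}\Omega$, and define the Bellman function $$\mathcal B(x_0,y_0)=\inf\Big\{\tfrac12\int_0^{+\infty}\langle x(t),x(t)\rangle\,dt:\ \ddot x(t)\in\Omega \text{ a.e.},\ x(0)=x_0,\ \dot x(0)=y_0\Big\},\qquad (x_0,y_0)\in U\oplus U.$$ Then $\mathcal B$ is strictly convex on $U\oplus U$.
   Context: Admissible trajectories are those $x$ with $\ddot x=u$ for a measurable control $u(t)\in\Omega$. *)

theory Defs
  imports "HOL-Analysis.Analysis"
begin

text \<open>A trajectory x on [0,oo) is admissible for the data (x0,y0) if
  x(t) = x0 + int_0^t y, y(t) = y0 + int_0^t u with u Lebesgue measurable and
  u(t) in Omega for almost every t >= 0; i.e. x is C^1, its derivative is absolutely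
  continuous, x(0)=x0, x'(0)=y0 and x'' = u a.e.\<close>
definition admissible :: "(real^2) set \<Rightarrow> real^2 \<Rightarrow> real^2 \<Rightarrow> (real \<Rightarrow> real^2) \<Rightarrow> bool" where
  "admissible \<Omega> x0 y0 x \<longleftrightarrow>
     (\<exists>y u. u \<in> borel_measurable lebesgue \<and>
        (AE t in lebesgue. t \<ge> 0 \<longrightarrow> u t \<in> \<Omega>) \<and>
        (\<forall>t\<ge>0. y t = y0 + integral {0..t} u) \<and>
        (\<forall>t\<ge>0. x t = x0 + integral {0..t} y))"

definition cost :: "(real \<Rightarrow> real^2) \<Rightarrow> ennreal" where
  "cost x = (\<integral>\<^sup>+ t. indicator {0..} t * ennreal ((x t \<bullet> x t) / 2) \<partial>lborel)"

definition bellman :: "(real^2) set \<Rightarrow> (real^2) \<times> (real^2) \<Rightarrow> ennreal" where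
  "bellman \<Omega> p = (INF x\<in>{x. admissible \<Omega> (fst p) (snd p) x}. cost x)"

definition strictly_convex_enn :: "('v::real_vector \<Rightarrow> ennreal) \<Rightarrow> bool" where
  "strictly_convex_enn f \<longleftrightarrow>
     (\<forall>p q t. p \<noteq> q \<longrightarrow> 0 < t \<longrightarrow> t < 1 \<longrightarrow>
        f (t *\<^sub>R p + (1 - t) *\<^sub>R q) < ennreal t * f p + ennreal (1 - t) * f q)"

end

theory Submission
  imports Defs
begin

text \<open>
  Let \<open>p \<noteq> q\<close> be initial states, \<open>0 < t < 1\<close>, and let \<open>x\<close>, \<open>z\<close> be admissible from \<open>p\<close>, \<open>q\<close>.
  Since the dynamics are linear and \<open>\<Omega>\<close> is convex, \<open>t x + (1 - t) z\<close> is admissible from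
  \<open>t p + (1 - t) q\<close>, and the identity
  \<open>|t a + (1 - t) b|\<^sup>2 + t (1 - t) |a - b|\<^sup>2 = t |a|\<^sup>2 + (1 - t) |b|\<^sup>2\<close> gives
  \<open>B(t p + (1 - t) q) + t (1 - t) cost(x - z) \<le> t cost x + (1 - t) cost z\<close>.
  As the controls are bounded by some \<open>R\<close>, the difference \<open>x - z\<close> stays within \<open>2 R s\<^sup>2\<close> of the
  line \<open>(x\<^sub>0 - x\<^sub>1) + s (y\<^sub>0 - y\<^sub>1)\<close>, which is not identically zero; hence on a short interval
  near \<open>0\<close> it is bounded away from \<open>0\<close>, and \<open>cost(x - z) \<ge> \<gamma>\<close> for a \<open>\<gamma> > 0\<close> depending only
  on \<open>p - q\<close>. Taking infima gives a gap of \<open>t (1 - t) \<gamma>\<close> in the convexity inequality, which is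
  strict because \<open>B\<close> is finite: a cubic trajectory steers any state to rest in finite time.
\<close>

lemma norm_integral_Icc_le:
  fixes f :: "real \<Rightarrow> 'a::real_normed_vector"
  assumes "f integrable_on {a..b}" "a \<le> b" "0 \<le> B" "\<And>s. s \<in> {a..b} \<Longrightarrow> norm (f s) \<le> B"
  shows "norm (integral {a..b} f) \<le> B * (b - a)"
  using has_integral_bound_real[of B "{}" f "integral {a..b} f" a b] assms by auto

lemma integrable_on_Icc_if_bounded_measurable:
  fixes u :: "real \<Rightarrow> 'a::euclidean_space"
  assumes "u \<in> borel_measurable lebesgue" "\<And>t. norm (u t) \<le> R"
  shows "u integrable_on {a..b}"
proof (rule measurable_bounded_by_integrable_imp_integrable[where g="\<lambda>_. R"])
  show "u \<in> borel_measurable (lebesgue_on {a..b})"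
    using assms(1) by (simp add: measurable_restrict_space1)
qed (use assms in auto)

lemma continuous_on_integral_from_0:
  fixes f :: "real \<Rightarrow> 'a::banach"
  assumes "\<And>b. f integrable_on {0..b}"
  shows "continuous_on {0..} (\<lambda>s. integral {0..s} f)"
  unfolding continuous_on_eq_continuous_within
proof
  fix x :: real assume "x \<in> {0..}"
  then have "continuous (at x within {0..x+1}) (\<lambda>s. integral {0..s} f)"
    using indefinite_integral_continuous_1[OF assms] by (simp add: continuous_on_eq_continuous_within)
  moreover have "at x within {0..x+1} = at x within {0..}"
    by (rule at_within_nhd[where S="{..<x+1}"]) auto
  ultimately show "continuous (at x within {0..}) (\<lambda>s. integral {0..s} f)" by simp
qed

lemma integral_truncated_derivative:
  fixes F f :: "real \<Rightarrow> 'a::banach"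
  assumes F: "\<And>s. (F has_vector_derivative f s) (at s)" and "F T = 0" "0 \<le> T" "0 \<le> t"
  shows "(if t \<le> T then F t else 0) = F 0 + integral {0..t} (\<lambda>s. if s \<le> T then f s else 0)"
proof -
  have ftc: "(f has_integral F a - F 0) {0..a}" if "0 \<le> a" for a
    using fundamental_theorem_of_calculus[OF that, of F f] F by (simp add: has_vector_derivative_at_within)
  have trunc: "((\<lambda>s. if s \<le> T then f s else 0) has_integral F a - F 0) {0..a}" if "0 \<le> a" "a \<le> T" for a
    by (rule has_integral_eq[OF _ ftc[OF that(1)]]) (use that in auto)
  show ?thesis
  proof (cases "t \<le> T")
    case True
    then show ?thesis using trunc[OF \<open>0 \<le> t\<close> True] by (simp add: integral_unique)
  next
    case False
    have "((\<lambda>s. if s \<le> T then f s else 0) has_integral 0) {T..t}"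
      by (rule has_integral_spike_finite[of "{T}" _ _ "\<lambda>_. 0"]) auto
    with trunc[OF \<open>0 \<le> T\<close> order_refl] have "((\<lambda>s. if s \<le> T then f s else 0) has_integral F T - F 0) {0..t}"
      using has_integral_combine[of 0 T t] False \<open>0 \<le> T\<close> by fastforce
    then show ?thesis using False \<open>F T = 0\<close> by (simp add: integral_unique)
  qed
qed

lemma has_vector_derivative_lincomb:
  fixes v w :: "'a::real_normed_vector"
  assumes "(a has_real_derivative a') (at t)" "(b has_real_derivative b') (at t)"
  shows "((\<lambda>t. a t *\<^sub>R v + b t *\<^sub>R w) has_vector_derivative a' *\<^sub>R v + b' *\<^sub>R w) (at t)"
  using assms by (auto intro!: derivative_eq_intros simp: has_real_derivative_iff_has_vector_derivative)

section \<open>Controlled trajectories\<close>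

text \<open>A normal form of admissibility: the control constraint holds everywhere rather than
  almost everywhere on \<open>[0, \<infinity>)\<close>, and the integral formulas hold at all times.\<close>

definition controlled ::
    "(real^2) set \<Rightarrow> real^2 \<Rightarrow> real^2 \<Rightarrow> (real \<Rightarrow> real^2) \<Rightarrow> (real \<Rightarrow> real^2) \<Rightarrow> (real \<Rightarrow> real^2) \<Rightarrow> bool"
  where
  "controlled \<Omega> x0 y0 u y x \<longleftrightarrow> u \<in> borel_measurable lebesgue \<and> (\<forall>t. u t \<in> \<Omega>) \<and>
     (\<forall>t. y t = y0 + integral {0..t} u) \<and> (\<forall>t. x t = x0 + integral {0..t} y)"

lemma controlled_velocity: "controlled \<Omega> x0 y0 u y x \<Longrightarrow> y t = y0 + integral {0..t} u"
  and controlled_position: "controlled \<Omega> x0 y0 u y x \<Longrightarrow> x t = x0 + integral {0..t} y"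
  by (simp_all add: controlled_def)

context
  fixes \<Omega> :: "(real^2) set" and R :: real and x0 y0 :: "real^2" and u y x :: "real \<Rightarrow> real^2"
  assumes controlled: "controlled \<Omega> x0 y0 u y x" and \<Omega>_bound: "\<Omega> \<subseteq> cball 0 R"
begin

lemma controlled_integrable_control: "u integrable_on {a..b}"
  using controlled \<Omega>_bound
  by (intro integrable_on_Icc_if_bounded_measurable[where R=R]) (auto simp: controlled_def)

lemma controlled_control_bound: "norm (u t) \<le> R"
  using controlled \<Omega>_bound by (auto simp: controlled_def)

lemma controlled_bound_nonneg: "0 \<le> R"
  using order_trans[OF norm_ge_zero controlled_control_bound] .

lemma controlled_velocity_bound:
  assumes "0 \<le> s" shows "norm (y s - y0) \<le> R * s"
  using norm_integral_Icc_le[OF controlled_integrable_control assms]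
    controlled_control_bound controlled_bound_nonneg
  by (simp add: controlled_velocity[OF controlled])

lemma controlled_velocity_continuous: "continuous_on {0..} y"
  using continuous_on_integral_from_0[OF controlled_integrable_control]
  by (simp add: controlled_velocity[OF controlled] continuous_intros)

lemma controlled_integrable_velocity: "y integrable_on {0..b}"
  by (rule integrable_continuous_real) (auto intro: continuous_on_subset[OF controlled_velocity_continuous])

lemma controlled_position_continuous: "continuous_on {0..} x"
  using continuous_on_integral_from_0[OF controlled_integrable_velocity]
  by (simp add: controlled_position[OF controlled] continuous_intros)

lemma controlled_position_taylor_bound:
  assumes "0 \<le> s" shows "norm (x s - x0 - s *\<^sub>R y0) \<le> R * s^2"
proof -
  have "integral {0..s} (\<lambda>\<sigma>. y \<sigma> - y0) = integral {0..s} y - integral {0..s} (\<lambda>_. y0)"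
    by (rule integral_diff[OF controlled_integrable_velocity integrable_const_ivl])
  then have "x s - x0 - s *\<^sub>R y0 = integral {0..s} (\<lambda>\<sigma>. y \<sigma> - y0)"
    using assms by (simp add: controlled_position[OF controlled])
  also have "norm \<dots> \<le> R * s * (s - 0)"
  proof (rule norm_integral_Icc_le)
    show "(\<lambda>\<sigma>. y \<sigma> - y0) integrable_on {0..s}"
      using controlled_integrable_velocity by (intro integrable_diff) auto
    show "norm (y \<sigma> - y0) \<le> R * s" if "\<sigma> \<in> {0..s}" for \<sigma>
      using controlled_velocity_bound[of \<sigma>] that controlled_bound_nonneg
      by (auto intro: order_trans mult_left_mono)
  qed (use assms controlled_bound_nonneg in auto)
  finally show ?thesis by (simp add: power2_eq_square)
qed

end

lemma controlled_imp_admissible: "controlled \<Omega> x0 y0 u y x \<Longrightarrow> admissible \<Omega> x0 y0 x"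
  unfolding controlled_def admissible_def by blast

lemma controlled_convex_combination:
  assumes c1: "controlled \<Omega> x0 y0 u y x" and c2: "controlled \<Omega> x1 y1 v z w"
    and "\<Omega> \<subseteq> cball 0 R" "convex \<Omega>" "0 \<le> t" "t \<le> 1"
  shows "controlled \<Omega> (t *\<^sub>R x0 + (1-t) *\<^sub>R x1) (t *\<^sub>R y0 + (1-t) *\<^sub>R y1)
           (\<lambda>s. t *\<^sub>R u s + (1-t) *\<^sub>R v s) (\<lambda>s. t *\<^sub>R y s + (1-t) *\<^sub>R z s) (\<lambda>s. t *\<^sub>R x s + (1-t) *\<^sub>R w s)"
proof -
  have meas: "(\<lambda>r. t *\<^sub>R u r + (1-t) *\<^sub>R v r) \<in> borel_measurable lebesgue"
    using c1 c2 by (auto simp: controlled_def)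
  have "t *\<^sub>R u s + (1-t) *\<^sub>R v s \<in> \<Omega>" for s
    using c1 c2 assms(4-6) by (intro convexD) (auto simp: controlled_def)
  moreover have "integral {0..s} (\<lambda>r. t *\<^sub>R u r + (1-t) *\<^sub>R v r) = t *\<^sub>R integral {0..s} u + (1-t) *\<^sub>R integral {0..s} v" for s
    using controlled_integrable_control[OF c1 assms(3), of 0 s] controlled_integrable_control[OF c2 assms(3), of 0 s]
    by (simp add: integral_add integrable_cmul)
  moreover have "integral {0..s} (\<lambda>r. t *\<^sub>R y r + (1-t) *\<^sub>R z r) = t *\<^sub>R integral {0..s} y + (1-t) *\<^sub>R integral {0..s} z" for s
    using controlled_integrable_velocity[OF c1 assms(3), of s] controlled_integrable_velocity[OF c2 assms(3), of s]
    by (simp add: integral_add integrable_cmul)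
  ultimately show ?thesis
    using meas controlled_velocity[OF c1] controlled_velocity[OF c2] controlled_position[OF c1] controlled_position[OF c2]
    unfolding controlled_def by (simp add: algebra_simps)
qed

lemma admissible_cong:
  assumes "\<And>s. 0 \<le> s \<Longrightarrow> x s = x' s"
  shows "admissible \<Omega> x0 y0 x \<longleftrightarrow> admissible \<Omega> x0 y0 x'"
  using assms unfolding admissible_def by auto

lemma admissible_obtain_controlled:
  assumes adm: "admissible \<Omega> x0 y0 x" and "closed \<Omega>" "0 \<in> \<Omega>"
  obtains u y X where "controlled \<Omega> x0 y0 u y X" "\<And>s. 0 \<le> s \<Longrightarrow> X s = x s"
proof -
  obtain y u where um: "u \<in> borel_measurable lebesgue"
    and ae: "AE t in lebesgue. t \<ge> 0 \<longrightarrow> u t \<in> \<Omega>"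
    and yd: "\<forall>t\<ge>0. y t = y0 + integral {0..t} u"
    and xd: "\<forall>t\<ge>0. x t = x0 + integral {0..t} y"
    using adm unfolding admissible_def by blast
  define u' where "u' t = (if u t \<in> \<Omega> then u t else 0)" for t
  define Y where "Y t = y0 + integral {0..t} u'" for t
  define X where "X t = x0 + integral {0..t} Y" for t
  have "{t \<in> space lebesgue. u t \<in> \<Omega>} \<in> sets lebesgue"
    using measurable_sets[OF um, of \<Omega>] \<open>closed \<Omega>\<close> by (simp add: vimage_def Int_def)
  then have "u' \<in> borel_measurable lebesgue"
    unfolding u'_def[abs_def] by (intro measurable_If[OF um]) auto
  moreover have "u' t \<in> \<Omega>" for t using \<open>0 \<in> \<Omega>\<close> by (simp add: u'_def)
  ultimately have "controlled \<Omega> x0 y0 u' Y X" by (simp add: controlled_def Y_def X_def)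
  moreover obtain N where N: "N \<in> null_sets lebesgue" "\<And>t. t \<notin> N \<Longrightarrow> t \<ge> 0 \<Longrightarrow> u t \<in> \<Omega>"
    using ae by (auto elim!: AE_E3)
  have "Y t = y t" if "t \<ge> 0" for t
  proof -
    have "integral {0..t} u' = integral {0..t} u"
      by (rule integral_spike[of N]) (use N in \<open>auto simp: u'_def negligible_iff_null_sets\<close>)
    then show ?thesis using yd that by (simp add: Y_def)
  qed
  then have "X t = x t" if "t \<ge> 0" for t
    using xd that integral_cong[of "{0..t}" Y y] by (simp add: X_def)
  ultimately show ?thesis using that by blast
qed

context
  fixes \<Omega> :: "(real^2) set" and R :: real
  assumes closed: "closed \<Omega>" and zero_mem: "0 \<in> \<Omega>" and bound: "\<Omega> \<subseteq> cball 0 R"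
begin

lemma admissible_continuous: "admissible \<Omega> x0 y0 x \<Longrightarrow> continuous_on {0..} x"
  by (erule admissible_obtain_controlled[OF _ closed zero_mem])
     (metis atLeast_iff continuous_on_cong controlled_position_continuous[OF _ bound])

lemma admissible_taylor_bound:
  "admissible \<Omega> x0 y0 x \<Longrightarrow> 0 \<le> s \<Longrightarrow> norm (x s - x0 - s *\<^sub>R y0) \<le> R * s^2"
  by (erule admissible_obtain_controlled[OF _ closed zero_mem])
     (metis controlled_position_taylor_bound[OF _ bound])

lemma admissible_convex_combination:
  assumes "convex \<Omega>" "admissible \<Omega> x0 y0 x" "admissible \<Omega> x1 y1 z" "0 \<le> t" "t \<le> 1"
  shows "admissible \<Omega> (t *\<^sub>R x0 + (1-t) *\<^sub>R x1) (t *\<^sub>R y0 + (1-t) *\<^sub>R y1) (\<lambda>s. t *\<^sub>R x s + (1-t) *\<^sub>R z s)"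
proof -
  obtain u y X where X: "controlled \<Omega> x0 y0 u y X" "\<And>s. 0 \<le> s \<Longrightarrow> X s = x s"
    using admissible_obtain_controlled[OF assms(2) closed zero_mem] by blast
  obtain v w Z where Z: "controlled \<Omega> x1 y1 v w Z" "\<And>s. 0 \<le> s \<Longrightarrow> Z s = z s"
    using admissible_obtain_controlled[OF assms(3) closed zero_mem] by blast
  have "admissible \<Omega> (t *\<^sub>R x0 + (1-t) *\<^sub>R x1) (t *\<^sub>R y0 + (1-t) *\<^sub>R y1) (\<lambda>s. t *\<^sub>R X s + (1-t) *\<^sub>R Z s)"
    by (rule controlled_imp_admissible, rule controlled_convex_combination[OF X(1) Z(1) bound])
       (use assms in auto)
  moreover have "t *\<^sub>R X s + (1-t) *\<^sub>R Z s = t *\<^sub>R x s + (1-t) *\<^sub>R z s" if "0 \<le> s" for s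
    using that by (simp add: X(2) Z(2))
  ultimately show ?thesis by (subst (asm) admissible_cong) auto
qed

end

section \<open>The cost functional\<close>

lemma borel_measurable_cost_integrand:
  fixes x :: "real \<Rightarrow> real^2"
  assumes "continuous_on {0..} x"
  shows "(\<lambda>t. indicator {0..} t * ennreal ((x t \<bullet> x t) / 2)) \<in> borel_measurable borel"
proof -
  have "(\<lambda>t. indicator {0..} t *\<^sub>R ((x t \<bullet> x t) / 2)) \<in> borel_measurable borel"
    using assms by (intro borel_measurable_continuous_on_indicator continuous_intros) (auto simp: atLeast_borel)
  then have "(\<lambda>t. ennreal (indicator {0..} t *\<^sub>R ((x t \<bullet> x t) / 2))) \<in> borel_measurable borel"
    by measurable
  moreover have "(\<lambda>t. ennreal (indicator {0..} t *\<^sub>R ((x t \<bullet> x t) / 2))) = (\<lambda>t. indicator {0..} t * ennreal ((x t \<bullet> x t) / 2))"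
    by (auto simp: indicator_def)
  ultimately show ?thesis by (simp only:)
qed

lemma inner_convex_combination_identity:
  fixes a b :: "'a::real_inner"
  shows "(t *\<^sub>R a + (1-t) *\<^sub>R b) \<bullet> (t *\<^sub>R a + (1-t) *\<^sub>R b) + t * (1-t) * ((a - b) \<bullet> (a - b))
    = t * (a \<bullet> a) + (1-t) * (b \<bullet> b)"
  by (simp add: inner_add_left inner_add_right inner_diff_left inner_diff_right inner_commute algebra_simps)

lemma ennreal_lincomb:
  "0 \<le> a \<Longrightarrow> 0 \<le> b \<Longrightarrow> 0 \<le> c \<Longrightarrow> 0 \<le> d \<Longrightarrow>
    ennreal a * ennreal b + ennreal c * ennreal d = ennreal (a * b + c * d)"
  by (simp add: ennreal_mult ennreal_plus)

lemma ennreal_convex_combination_identity: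
  fixes a b :: "'a::real_inner"
  assumes "0 \<le> t" "t \<le> 1"
  shows "ennreal (((t *\<^sub>R a + (1-t) *\<^sub>R b) \<bullet> (t *\<^sub>R a + (1-t) *\<^sub>R b)) / 2)
      + ennreal (t * (1-t)) * ennreal (((a - b) \<bullet> (a - b)) / 2)
    = ennreal t * ennreal ((a \<bullet> a) / 2) + ennreal (1-t) * ennreal ((b \<bullet> b) / 2)"
proof -
  let ?w = "((t *\<^sub>R a + (1-t) *\<^sub>R b) \<bullet> (t *\<^sub>R a + (1-t) *\<^sub>R b)) / 2" and ?d = "((a - b) \<bullet> (a - b)) / 2"
  have "ennreal ?w + ennreal (t * (1-t)) * ennreal ?d = ennreal (1 * ?w + t * (1-t) * ?d)"
    by (subst ennreal_lincomb[symmetric]) (use assms in auto)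
  also have "1 * ?w + t * (1-t) * ?d = t * ((a \<bullet> a) / 2) + (1-t) * ((b \<bullet> b) / 2)"
    using inner_convex_combination_identity[of t a b] by simp
  also have "ennreal \<dots> = ennreal t * ennreal ((a \<bullet> a) / 2) + ennreal (1-t) * ennreal ((b \<bullet> b) / 2)"
    by (rule ennreal_lincomb[symmetric]) (use assms in auto)
  finally show ?thesis .
qed

lemma cost_convex_combination:
  fixes x z :: "real \<Rightarrow> real^2"
  assumes x: "continuous_on {0..} x" and z: "continuous_on {0..} z" and "0 \<le> t" "t \<le> 1"
  shows "cost (\<lambda>s. t *\<^sub>R x s + (1-t) *\<^sub>R z s) + ennreal (t * (1-t)) * cost (\<lambda>s. x s - z s)
       = ennreal t * cost x + ennreal (1-t) * cost z"
proof -
  let ?f = "\<lambda>x s. indicator {0..} s * ennreal ((x s \<bullet> x s) / 2)"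
    and ?w = "\<lambda>s. t *\<^sub>R x s + (1-t) *\<^sub>R z s" and ?d = "\<lambda>s. x s - z s"
  have pointwise: "?f ?w s + ennreal (t * (1-t)) * ?f ?d s = ennreal t * ?f x s + ennreal (1-t) * ?f z s" for s
    using ennreal_convex_combination_identity[of t "x s" "z s"] assms by (simp add: indicator_def)
  have meas: "?f w \<in> borel_measurable borel" if "continuous_on {0..} w" for w :: "real \<Rightarrow> real^2"
    using borel_measurable_cost_integrand[OF that] .
  have w: "?f ?w \<in> borel_measurable borel" and d: "?f ?d \<in> borel_measurable borel"
    using x z by (auto intro!: meas continuous_intros)
  have "cost ?w + ennreal (t * (1-t)) * cost ?d = (\<integral>\<^sup>+ s. ?f ?w s \<partial>lborel) + (\<integral>\<^sup>+ s. ennreal (t * (1-t)) * ?f ?d s \<partial>lborel)"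
    unfolding cost_def by (simp add: nn_integral_cmult d)
  also have "\<dots> = (\<integral>\<^sup>+ s. ?f ?w s + ennreal (t * (1-t)) * ?f ?d s \<partial>lborel)"
    by (rule nn_integral_add[symmetric]) (use w d in auto)
  also have "\<dots> = (\<integral>\<^sup>+ s. ennreal t * ?f x s + ennreal (1-t) * ?f z s \<partial>lborel)"
    by (simp only: pointwise)
  also have "\<dots> = (\<integral>\<^sup>+ s. ennreal t * ?f x s \<partial>lborel) + (\<integral>\<^sup>+ s. ennreal (1-t) * ?f z s \<partial>lborel)"
    by (rule nn_integral_add) (use meas[OF x] meas[OF z] in auto)
  also have "\<dots> = ennreal t * cost x + ennreal (1-t) * cost z"
    unfolding cost_def by (simp add: nn_integral_cmult meas x z)
  finally show ?thesis .
qed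

lemma perturbed_line_bounded_away_from_0:
  fixes d0 e0 :: "'a::real_normed_vector"
  assumes "(d0, e0) \<noteq> (0, 0)" "0 \<le> K"
  obtains h c where "0 < h" "h \<le> 1" "0 < c"
    "\<And>v s. h/2 \<le> s \<Longrightarrow> s \<le> h \<Longrightarrow> norm (v - d0 - s *\<^sub>R e0) \<le> K * s^2 \<Longrightarrow> c \<le> norm v"
proof (cases "d0 = 0")
  case False
  define h where "h = min 1 (norm d0 / (2 * (norm e0 + K + 1)))"
  have "0 < h" "h \<le> 1" using False assms(2) by (simp_all add: h_def add_nonneg_pos)
  have h_small: "h * (norm e0 + K) \<le> norm d0 / 2"
  proof -
    have "h * (norm e0 + K) \<le> norm d0 / (2 * (norm e0 + K + 1)) * (norm e0 + K + 1)"
      using \<open>0 < h\<close> assms(2) by (intro mult_mono) (auto simp: h_def)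
    also have "\<dots> = norm d0 / 2" using assms(2) by (simp add: field_simps add_nonneg_eq_0_iff)
    finally show ?thesis .
  qed
  have "norm d0 / 2 \<le> norm v" if "h/2 \<le> s" "s \<le> h" "norm (v - d0 - s *\<^sub>R e0) \<le> K * s^2" for v s
  proof -
    have s: "0 \<le> s" "s \<le> 1" using that \<open>0 < h\<close> \<open>h \<le> 1\<close> by auto
    then have "K * s^2 \<le> K * s" using assms(2) by (intro mult_left_mono) (auto simp: power2_eq_square mult_left_le_one_le)
    have "norm d0 \<le> norm (v - (v - d0 - s *\<^sub>R e0)) + norm (s *\<^sub>R e0)"
      using norm_triangle_ineq4[of "v - (v - d0 - s *\<^sub>R e0)" "s *\<^sub>R e0"] by simp
    also have "\<dots> \<le> norm v + norm (v - d0 - s *\<^sub>R e0) + norm (s *\<^sub>R e0)"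
      using norm_triangle_ineq4[of v "v - d0 - s *\<^sub>R e0"] by simp
    also have "\<dots> \<le> norm v + s * (norm e0 + K)"
      using that s \<open>K * s^2 \<le> K * s\<close> by (simp add: algebra_simps)
    also have "\<dots> \<le> norm v + h * (norm e0 + K)"
      using that assms(2) by (simp add: mult_right_mono)
    finally show ?thesis using h_small by simp
  qed
  then show ?thesis using that[of h "norm d0 / 2"] \<open>0 < h\<close> \<open>h \<le> 1\<close> False by auto
next
  case True
  then have "0 < norm e0" using assms(1) by simp
  define h where "h = min 1 (norm e0 / (2 * K + 2))"
  have "0 < h" "h \<le> 1" using \<open>0 < norm e0\<close> assms(2) by (auto simp: h_def)
  have h_small: "K * h \<le> norm e0 / 2"
  proof -
    have "K * h \<le> K * (norm e0 / (2 * K + 2))" using assms(2) by (intro mult_left_mono) (auto simp: h_def)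
    also have "\<dots> \<le> norm e0 / 2" using assms(2) \<open>0 < norm e0\<close> by (simp add: field_simps)
    finally show ?thesis .
  qed
  have "h * norm e0 / 4 \<le> norm v" if "h/2 \<le> s" "s \<le> h" "norm (v - d0 - s *\<^sub>R e0) \<le> K * s^2" for v s
  proof -
    have "0 \<le> s" using that \<open>0 < h\<close> by auto
    have "s * norm e0 \<le> norm v + norm (v - s *\<^sub>R e0)"
      using norm_triangle_ineq4[of v "v - s *\<^sub>R e0"] \<open>0 \<le> s\<close> by simp
    also have "\<dots> \<le> norm v + s * (K * h)"
    proof -
      have "K * s^2 \<le> s * (K * h)"
        using that assms(2) \<open>0 \<le> s\<close> mult_left_mono[of s h "K * s"] by (simp add: power2_eq_square mult_ac)
      then show ?thesis using that True by simp
    qed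
    also have "\<dots> \<le> norm v + s * (norm e0 / 2)"
      using mult_left_mono[OF h_small \<open>0 \<le> s\<close>] by simp
    finally have "s * norm e0 / 2 \<le> norm v" by simp
    moreover have "h * norm e0 / 4 \<le> s * norm e0 / 2"
      using that \<open>0 < norm e0\<close> by (simp add: field_simps)
    ultimately show ?thesis by simp
  qed
  then show ?thesis using that[of h "h * norm e0 / 4"] \<open>0 < h\<close> \<open>h \<le> 1\<close> \<open>0 < norm e0\<close> by auto
qed

lemma cost_lower_bound_near_0:
  fixes d0 e0 :: "real^2"
  assumes "(d0, e0) \<noteq> (0, 0)" "0 \<le> K"
  obtains \<gamma> where "0 < \<gamma>"
    "\<And>d. (\<And>s. 0 \<le> s \<Longrightarrow> s \<le> 1 \<Longrightarrow> norm (d s - d0 - s *\<^sub>R e0) \<le> K * s^2) \<Longrightarrow> ennreal \<gamma> \<le> cost d"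
proof -
  obtain h c where "0 < h" "h \<le> 1" "0 < c"
    and away: "\<And>v s. h/2 \<le> s \<Longrightarrow> s \<le> h \<Longrightarrow> norm (v - d0 - s *\<^sub>R e0) \<le> K * s^2 \<Longrightarrow> c \<le> norm v"
    using perturbed_line_bounded_away_from_0[OF assms] by blast
  have "ennreal (c^2/2 * (h/2)) \<le> cost d"
    if d: "\<And>s. 0 \<le> s \<Longrightarrow> s \<le> 1 \<Longrightarrow> norm (d s - d0 - s *\<^sub>R e0) \<le> K * s^2" for d
  proof -
    have "ennreal (c^2/2 * (h/2)) = (\<integral>\<^sup>+ s. ennreal (c^2/2) * indicator {h/2..h} s \<partial>lborel)"
      using \<open>0 < h\<close> by (simp add: nn_integral_cmult_indicator flip: ennreal_mult)
    also have "\<dots> \<le> cost d"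
      unfolding cost_def
    proof (rule nn_integral_mono)
      fix s :: real
      show "ennreal (c^2/2) * indicator {h/2..h} s \<le> indicator {0..} s * ennreal ((d s \<bullet> d s) / 2)"
      proof (cases "s \<in> {h/2..h}")
        case True
        then have "c \<le> norm (d s)" using away d \<open>0 < h\<close> \<open>h \<le> 1\<close> by auto
        then have "c^2 \<le> d s \<bullet> d s"
          using \<open>0 < c\<close> power_mono[of c "norm (d s)" 2] by (simp add: power2_norm_eq_inner)
        then show ?thesis using True \<open>0 < h\<close> by (simp add: ennreal_leI)
      qed simp
    qed
    finally show ?thesis .
  qed
  then show ?thesis using that[of "c^2/2 * (h/2)"] \<open>0 < c\<close> \<open>0 < h\<close> by simp
qed

lemma cost_less_top_if_vanishes_after:
  fixes x :: "real \<Rightarrow> real^2"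
  assumes "continuous_on {0..T} x" "\<And>t. T < t \<Longrightarrow> x t = 0"
  shows "cost x < \<infinity>"
proof -
  obtain M where M: "\<And>t. t \<in> {0..T} \<Longrightarrow> norm (x t) \<le> M"
    using compact_imp_bounded[OF compact_continuous_image[OF assms(1) compact_Icc]]
    unfolding bounded_iff by blast
  have "cost x \<le> (\<integral>\<^sup>+ t. ennreal (M^2/2) * indicator {0..T} t \<partial>lborel)"
    unfolding cost_def
  proof (rule nn_integral_mono)
    fix t :: real
    show "indicator {0..} t * ennreal ((x t \<bullet> x t) / 2) \<le> ennreal (M^2/2) * indicator {0..T} t"
    proof (cases "t \<in> {0..T}")
      case True
      then have "x t \<bullet> x t \<le> M^2"
        using M[OF True] power_mono[of "norm (x t)" M 2] by (simp add: power2_norm_eq_inner)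
      then show ?thesis using True by (simp add: ennreal_leI)
    qed (auto simp: assms(2))
  qed
  also have "\<dots> < \<infinity>"
    by (simp add: nn_integral_cmult_indicator ennreal_mult_less_top emeasure_lborel_Icc_eq)
  finally show ?thesis .
qed

section \<open>Finiteness of the Bellman function\<close>

lemma bellman_le_cost: "admissible \<Omega> x0 y0 x \<Longrightarrow> bellman \<Omega> (x0, y0) \<le> cost x"
  unfolding bellman_def by (rule INF_lower) simp

text \<open>The cubic through position \<open>x0\<close> with velocity \<open>y0\<close> at time \<open>0\<close> and at rest at the
  origin at time \<open>T\<close>; its acceleration is of order \<open>(|x0| + |y0|) / T\<close>.\<close>

definition hermite_position :: "real \<Rightarrow> 'a::real_vector \<Rightarrow> 'a \<Rightarrow> real \<Rightarrow> 'a" where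
  "hermite_position T x0 y0 t = (1 - 3*t^2/T^2 + 2*t^3/T^3) *\<^sub>R x0 + (t - 2*t^2/T + t^3/T^2) *\<^sub>R y0"

definition hermite_velocity :: "real \<Rightarrow> 'a::real_vector \<Rightarrow> 'a \<Rightarrow> real \<Rightarrow> 'a" where
  "hermite_velocity T x0 y0 t = ((6*t^2 - 6*T*t)/T^3) *\<^sub>R x0 + ((3*t^2 - 4*T*t + T^2)/T^2) *\<^sub>R y0"

definition hermite_control :: "real \<Rightarrow> 'a::real_vector \<Rightarrow> 'a \<Rightarrow> real \<Rightarrow> 'a" where
  "hermite_control T x0 y0 t = ((12*t - 6*T)/T^3) *\<^sub>R x0 + ((6*t - 4*T)/T^2) *\<^sub>R y0"

context
  fixes T :: real and x0 y0 :: "'a::real_normed_vector"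
  assumes T: "T \<noteq> 0"
begin

lemma hermite_position_derivative: "(hermite_position T x0 y0 has_vector_derivative hermite_velocity T x0 y0 t) (at t)"
  and hermite_velocity_derivative: "(hermite_velocity T x0 y0 has_vector_derivative hermite_control T x0 y0 t) (at t)"
  unfolding hermite_position_def[abs_def] hermite_velocity_def[abs_def] hermite_control_def
  using T by (intro has_vector_derivative_lincomb; auto intro!: derivative_eq_intros simp: field_simps power2_eq_square power3_eq_cube)+

lemma hermite_boundary_values:
  "hermite_position T x0 y0 0 = x0" "hermite_velocity T x0 y0 0 = y0"
  "hermite_position T x0 y0 T = 0" "hermite_velocity T x0 y0 T = 0"
  using T by (simp_all add: hermite_position_def hermite_velocity_def field_simps power2_eq_square power3_eq_cube)

lemma continuous_on_hermite: "continuous_on UNIV (hermite_position T x0 y0)" "continuous_on UNIV (hermite_control T x0 y0)"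
  unfolding hermite_position_def[abs_def] hermite_control_def[abs_def] using T by (auto intro!: continuous_intros)

end

lemma hermite_control_bound:
  fixes x0 y0 :: "'a::real_normed_vector"
  assumes "1 \<le> T" "0 \<le> t" "t \<le> T"
  shows "norm (hermite_control T x0 y0 t) \<le> (6 * norm x0 + 4 * norm y0) / T"
proof -
  have "6*T \<le> 6*T * T" using assms by (simp add: mult_le_cancel_left1)
  then have "\<bar>12*t - 6*T\<bar> \<le> 6*T * T" unfolding abs_le_iff using assms by linarith
  then have a: "\<bar>(12*t - 6*T)/T^3\<bar> \<le> 6/T"
    using assms by (simp add: abs_divide divide_le_eq power3_eq_cube mult_ac)
  have "\<bar>6*t - 4*T\<bar> \<le> 4*T" using assms by (simp add: abs_le_iff)
  then have b: "\<bar>(6*t - 4*T)/T^2\<bar> \<le> 4/T"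
    using assms by (simp add: abs_divide divide_le_eq power2_eq_square mult_ac)
  have "norm (hermite_control T x0 y0 t) \<le> \<bar>(12*t - 6*T)/T^3\<bar> * norm x0 + \<bar>(6*t - 4*T)/T^2\<bar> * norm y0"
    unfolding hermite_control_def using norm_triangle_ineq by (metis norm_scaleR)
  also have "\<dots> \<le> 6/T * norm x0 + 4/T * norm y0"
    using a b by (intro add_mono mult_right_mono) auto
  finally show ?thesis by (simp add: add_divide_distrib)
qed

lemma admissible_truncation:
  fixes P P' P'' :: "real \<Rightarrow> real^2"
  assumes "\<And>t. (P has_vector_derivative P' t) (at t)" "\<And>t. (P' has_vector_derivative P'' t) (at t)"
    and "P T = 0" "P' T = 0" "0 \<le> T" "continuous_on UNIV P''"
    and "\<And>t. 0 \<le> t \<Longrightarrow> t \<le> T \<Longrightarrow> P'' t \<in> \<Omega>" "0 \<in> \<Omega>"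
  shows "admissible \<Omega> (P 0) (P' 0) (\<lambda>t. if t \<le> T then P t else 0)"
proof -
  have "(\<lambda>t. if t \<in> {..T} then P'' t else 0) \<in> borel_measurable borel"
    using assms(6) by (intro borel_measurable_continuous_on_if) (auto intro: continuous_on_subset)
  then have "(\<lambda>t. if t \<le> T then P'' t else 0) \<in> borel_measurable lebesgue"
    by (simp add: measurable_completion)
  moreover have "(if t \<le> T then P'' t else 0) \<in> \<Omega>" if "0 \<le> t" for t
    using assms(7,8) that by simp
  moreover have
      "(if t \<le> T then P' t else 0) = P' 0 + integral {0..t} (\<lambda>s. if s \<le> T then P'' s else 0)"
      "(if t \<le> T then P t else 0) = P 0 + integral {0..t} (\<lambda>s. if s \<le> T then P' s else 0)"
    if "0 \<le> t" for t
    using integral_truncated_derivative[OF assms(2,4,5) that] integral_truncated_derivative[OF assms(1,3,5) that]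
    by simp_all
  ultimately show ?thesis
    unfolding admissible_def
    by (intro exI[of _ "\<lambda>t. if t \<le> T then P' t else 0"] exI[of _ "\<lambda>t. if t \<le> T then P'' t else 0"]
          conjI AE_I2 allI impI) simp_all
qed

lemma admissible_steering_to_rest:
  assumes "0 \<in> interior \<Omega>"
  obtains x T where "admissible \<Omega> x0 y0 x" "continuous_on {0..T} x" "\<And>t. T < t \<Longrightarrow> x t = 0"
proof -
  obtain r where "r > 0" "cball 0 r \<subseteq> \<Omega>" using assms mem_interior_cball by blast
  define T where "T = 1 + (6 * norm x0 + 4 * norm y0) / r"
  have "1 \<le> T" "6 * norm x0 + 4 * norm y0 \<le> r * T" using \<open>r > 0\<close> by (simp_all add: T_def field_simps)
  then have "T \<noteq> 0" by auto
  have "hermite_control T x0 y0 t \<in> \<Omega>" if "0 \<le> t" "t \<le> T" for t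
  proof -
    have "norm (hermite_control T x0 y0 t) \<le> (6 * norm x0 + 4 * norm y0) / T"
      by (rule hermite_control_bound[OF \<open>1 \<le> T\<close> that])
    also have "\<dots> \<le> r" using \<open>6 * norm x0 + 4 * norm y0 \<le> r * T\<close> \<open>1 \<le> T\<close> by (simp add: divide_le_eq)
    finally show ?thesis using \<open>cball 0 r \<subseteq> \<Omega>\<close> by (simp add: subset_iff)
  qed
  then have "admissible \<Omega> x0 y0 (\<lambda>t. if t \<le> T then hermite_position T x0 y0 t else 0)"
    using admissible_truncation[OF hermite_position_derivative hermite_velocity_derivative,
        of T x0 y0 T \<Omega>] \<open>T \<noteq> 0\<close> \<open>1 \<le> T\<close> \<open>r > 0\<close> \<open>cball 0 r \<subseteq> \<Omega>\<close>
    by (simp add: hermite_boundary_values continuous_on_hermite subset_iff)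
  moreover have "continuous_on {0..T} (\<lambda>t. if t \<le> T then hermite_position T x0 y0 t else 0)"
    by (rule continuous_on_eq[OF continuous_on_subset[OF continuous_on_hermite(1)[OF \<open>T \<noteq> 0\<close>]]]) auto
  ultimately show ?thesis using that by auto
qed

section \<open>Strict convexity\<close>

lemma ennreal_INF_affine:
  fixes f :: "'a \<Rightarrow> ennreal"
  assumes "A \<noteq> {}"
  shows "ennreal c * (INF x\<in>A. f x) + d = (INF x\<in>A. ennreal c * f x + d)"
proof -
  have "continuous_on UNIV (\<lambda>y. ennreal c * y + d)"
    by (intro continuous_on_add_ennreal ennreal_continuous_on_cmult continuous_on_id continuous_on_const) simp
  then have "continuous (at_right (Inf (f ` A))) (\<lambda>y. ennreal c * y + d)"
    by (simp add: continuous_on_eq_continuous_within continuous_at_imp_continuous_at_within)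
  moreover have "mono (\<lambda>y. ennreal c * y + d)" by (auto intro!: monoI add_right_mono mult_left_mono)
  ultimately show ?thesis
    using continuous_at_Inf_mono[of "\<lambda>y. ennreal c * y + d" "f ` A"] assms by (simp add: image_comp)
qed

lemma le_convex_combination_INF_ennreal:
  fixes f g :: "'a \<Rightarrow> ennreal"
  assumes "A \<noteq> {}" "B \<noteq> {}" "\<And>x z. x \<in> A \<Longrightarrow> z \<in> B \<Longrightarrow> c \<le> ennreal t * f x + ennreal s * g z"
  shows "c \<le> ennreal t * (INF x\<in>A. f x) + ennreal s * (INF z\<in>B. g z)"
proof -
  have "ennreal t * f x + ennreal s * (INF z\<in>B. g z) = (INF z\<in>B. ennreal s * g z + ennreal t * f x)" for x
    using ennreal_INF_affine[OF assms(2), of s g "ennreal t * f x"] by (simp add: add.commute)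
  then have "ennreal t * (INF x\<in>A. f x) + ennreal s * (INF z\<in>B. g z)
      = (INF x\<in>A. INF z\<in>B. ennreal s * g z + ennreal t * f x)"
    by (simp add: ennreal_INF_affine[OF assms(1)])
  then show ?thesis
    using assms(3) by (simp add: le_INF_iff add.commute)
qed

lemma bellman_less_top:
  assumes "0 \<in> interior \<Omega>"
  shows "bellman \<Omega> p < \<infinity>"
proof -
  obtain x T where x: "admissible \<Omega> (fst p) (snd p) x" "continuous_on {0..T} x" "\<And>t. T < t \<Longrightarrow> x t = 0"
    using admissible_steering_to_rest[OF assms] by blast
  have "bellman \<Omega> (fst p, snd p) \<le> cost x" using x(1) by (rule bellman_le_cost)
  also have "\<dots> < \<infinity>" using x(2,3) by (rule cost_less_top_if_vanishes_after)
  finally show ?thesis by simp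
qed

lemma admissible_convex_combination_cost_gap:
  assumes "convex \<Omega>" "closed \<Omega>" "0 \<in> \<Omega>" "\<Omega> \<subseteq> cball 0 R" "p \<noteq> q"
  obtains \<gamma> where "0 < \<gamma>"
    "\<And>t x z. 0 \<le> t \<Longrightarrow> t \<le> 1 \<Longrightarrow> admissible \<Omega> (fst p) (snd p) x \<Longrightarrow> admissible \<Omega> (fst q) (snd q) z \<Longrightarrow>
       bellman \<Omega> (t *\<^sub>R p + (1-t) *\<^sub>R q) + ennreal (t * (1-t) * \<gamma>) \<le> ennreal t * cost x + ennreal (1-t) * cost z"
proof -
  have "0 \<le> R" using assms(3,4) by auto
  have "(fst p - fst q, snd p - snd q) \<noteq> (0, 0)" using assms(5) by (simp add: prod_eq_iff)
  obtain \<gamma> where "0 < \<gamma>" and gap: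
    "\<And>d. (\<And>s. 0 \<le> s \<Longrightarrow> s \<le> 1 \<Longrightarrow> norm (d s - (fst p - fst q) - s *\<^sub>R (snd p - snd q)) \<le> (2 * R) * s^2)
       \<Longrightarrow> ennreal \<gamma> \<le> cost d"
    by (rule cost_lower_bound_near_0[OF \<open>(fst p - fst q, snd p - snd q) \<noteq> (0, 0)\<close>, of "2 * R"]) (use \<open>0 \<le> R\<close> in auto)
  have "bellman \<Omega> (t *\<^sub>R p + (1-t) *\<^sub>R q) + ennreal (t * (1-t) * \<gamma>) \<le> ennreal t * cost x + ennreal (1-t) * cost z"
    if t: "0 \<le> t" "t \<le> 1" and x: "admissible \<Omega> (fst p) (snd p) x" and z: "admissible \<Omega> (fst q) (snd q) z" for t x z
  proof -
    have "admissible \<Omega> (fst (t *\<^sub>R p + (1-t) *\<^sub>R q)) (snd (t *\<^sub>R p + (1-t) *\<^sub>R q)) (\<lambda>s. t *\<^sub>R x s + (1-t) *\<^sub>R z s)"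
      using admissible_convex_combination[OF assms(2-4,1) x z t] by simp
    from bellman_le_cost[OF this]
    have "bellman \<Omega> (t *\<^sub>R p + (1-t) *\<^sub>R q) \<le> cost (\<lambda>s. t *\<^sub>R x s + (1-t) *\<^sub>R z s)"
      by (simp only: prod.collapse)
    moreover have "ennreal \<gamma> \<le> cost (\<lambda>s. x s - z s)"
    proof (rule gap)
      fix s :: real assume "0 \<le> s"
      have "norm (x s - z s - (fst p - fst q) - s *\<^sub>R (snd p - snd q))
          \<le> norm (x s - fst p - s *\<^sub>R snd p) + norm (z s - fst q - s *\<^sub>R snd q)"
        by (rule order_trans[OF _ norm_triangle_ineq4]) (simp add: algebra_simps)
      also have "\<dots> \<le> (2 * R) * s^2"
        using admissible_taylor_bound[OF assms(2-4) x \<open>0 \<le> s\<close>] admissible_taylor_bound[OF assms(2-4) z \<open>0 \<le> s\<close>]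
        by simp
      finally show "norm (x s - z s - (fst p - fst q) - s *\<^sub>R (snd p - snd q)) \<le> (2 * R) * s^2" .
    qed
    then have "ennreal (t * (1-t) * \<gamma>) \<le> ennreal (t * (1-t)) * cost (\<lambda>s. x s - z s)"
      using t \<open>0 < \<gamma>\<close> by (simp add: ennreal_mult mult_left_mono)
    ultimately have "bellman \<Omega> (t *\<^sub>R p + (1-t) *\<^sub>R q) + ennreal (t * (1-t) * \<gamma>)
        \<le> cost (\<lambda>s. t *\<^sub>R x s + (1-t) *\<^sub>R z s) + ennreal (t * (1-t)) * cost (\<lambda>s. x s - z s)"
      by (rule add_mono)
    also have "\<dots> = ennreal t * cost x + ennreal (1-t) * cost z"
      by (rule cost_convex_combination[OF admissible_continuous[OF assms(2-4) x]
            admissible_continuous[OF assms(2-4) z] t])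
    finally show ?thesis .
  qed
  with \<open>0 < \<gamma>\<close> show ?thesis by (rule that)
qed


lemma bellman_convex_combination_gap:
  assumes "convex \<Omega>" "compact \<Omega>" "0 \<in> interior \<Omega>" "p \<noteq> q" "0 \<le> t" "t \<le> 1"
  obtains \<gamma> where "0 < \<gamma>"
    "bellman \<Omega> (t *\<^sub>R p + (1-t) *\<^sub>R q) + ennreal (t * (1-t) * \<gamma>) \<le> ennreal t * bellman \<Omega> p + ennreal (1-t) * bellman \<Omega> q"
proof -
  obtain R where "\<Omega> \<subseteq> cball 0 R"
    using compact_imp_bounded[OF assms(2)] unfolding bounded_iff by (auto simp: subset_iff)
  obtain \<gamma> where "0 < \<gamma>" and gap:
    "\<And>x z. admissible \<Omega> (fst p) (snd p) x \<Longrightarrow> admissible \<Omega> (fst q) (snd q) z \<Longrightarrow>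
       bellman \<Omega> (t *\<^sub>R p + (1-t) *\<^sub>R q) + ennreal (t * (1-t) * \<gamma>) \<le> ennreal t * cost x + ennreal (1-t) * cost z"
    by (rule admissible_convex_combination_cost_gap[OF assms(1) compact_imp_closed[OF assms(2)]
        interior_subset[THEN subsetD, OF assms(3)] \<open>\<Omega> \<subseteq> cball 0 R\<close> assms(4)]) (use assms(5,6) in blast)
  obtain x T where "admissible \<Omega> (fst p) (snd p) x" "continuous_on {0..T} x" "\<And>t. T < t \<Longrightarrow> x t = 0"
    using admissible_steering_to_rest[OF assms(3), of "fst p" "snd p"] by blast
  obtain z T' where "admissible \<Omega> (fst q) (snd q) z" "continuous_on {0..T'} z" "\<And>t. T' < t \<Longrightarrow> z t = 0"
    using admissible_steering_to_rest[OF assms(3), of "fst q" "snd q"] by blast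
  have "bellman \<Omega> (t *\<^sub>R p + (1-t) *\<^sub>R q) + ennreal (t * (1-t) * \<gamma>) \<le> ennreal t * bellman \<Omega> p + ennreal (1-t) * bellman \<Omega> q"
    unfolding bellman_def[of \<Omega> p] bellman_def[of \<Omega> q]
  proof (rule le_convex_combination_INF_ennreal)
    show "{x. admissible \<Omega> (fst p) (snd p) x} \<noteq> {}" "{z. admissible \<Omega> (fst q) (snd q) z} \<noteq> {}"
      using \<open>admissible \<Omega> (fst p) (snd p) x\<close> \<open>admissible \<Omega> (fst q) (snd q) z\<close> by auto
  qed (simp add: gap)
  with \<open>0 < \<gamma>\<close> show ?thesis by (rule that)
qed


lemma ennreal_less_if_add_le:
  fixes a b :: ennreal
  assumes "a + ennreal \<delta> \<le> b" "b < \<infinity>" "0 < \<delta>"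
  shows "a < b"
proof -
  have "a \<le> a + ennreal \<delta>" by simp
  then have "a < \<infinity>" using assms(1,2) by (blast intro: order.trans le_less_trans)
  then have "a < a + ennreal \<delta>" using assms(3) ennreal_add_left_cancel_less[of a 0] by simp
  then show ?thesis using assms(1) by (rule less_le_trans)
qed

theorem lemma2:
  fixes \<Omega> :: "(real^2) set"
  assumes "convex \<Omega>" and "compact \<Omega>" and "0 \<in> interior \<Omega>"
  shows "strictly_convex_enn (bellman \<Omega>)"
  unfolding strictly_convex_enn_def
proof (intro allI impI)
  fix p q :: "(real^2) \<times> (real^2)" and t :: real
  assume "p \<noteq> q" "0 < t" "t < 1"
  obtain \<gamma> where "0 < \<gamma>" and gap:
    "bellman \<Omega> (t *\<^sub>R p + (1-t) *\<^sub>R q) + ennreal (t * (1-t) * \<gamma>)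
      \<le> ennreal t * bellman \<Omega> p + ennreal (1-t) * bellman \<Omega> q"
    using bellman_convex_combination_gap[OF assms \<open>p \<noteq> q\<close>, of t] \<open>0 < t\<close> \<open>t < 1\<close> by auto
  have "ennreal t * bellman \<Omega> p + ennreal (1-t) * bellman \<Omega> q < \<infinity>"
    using bellman_less_top[OF assms(3)] by (simp add: ennreal_mult_less_top)
  moreover have "0 < t * (1-t) * \<gamma>" using \<open>0 < \<gamma>\<close> \<open>0 < t\<close> \<open>t < 1\<close> by simp
  ultimately show "bellman \<Omega> (t *\<^sub>R p + (1-t) *\<^sub>R q) < ennreal t * bellman \<Omega> p + ennreal (1-t) * bellman \<Omega> q"
    by (rule ennreal_less_if_add_le[OF gap])
qed

end
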